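(* There is a class $\mathcal{C}$ of digraphs of bounded expansion such that for every constant $c$ we have $\gamma_1(G)\ge c$ for infinitely many $G\in\mathcal{C}$, and $\alpha_1(G)=2$ for all $G\in\mathcal{C}$.
   Context: Directed models and depth-$r$ minors: a digraph $H$ has a directed model in $G$ if there is a map $\delta$ assigning to each $v\in V(H)$ a subgraph $\delta(v)\subseteq G$ and to each arc $e$ of $H$ an arc $\delta(e)$ of $G$ with (1) branch sets pairwise disjoint; (2) if $e=(u,v)$ and $\delta(e)=(u',v')$ then $u'\in\delta(u)$, $v'\in\delta(v)$; (3) for each $v$, with $\mathrm{in}(\delta(v))$ (resp. $\mathrm{out}(\delta(v))$) the vertices of $\delta(v)$ on images of arcs entering (resp. leaving) $v$: every in-vertex reaches every out-vertex by a directed path in $\delta(v)$, some vertex of $\delta(v)$ reaches all out-vertices, and some vertex of $\delta(v)$ is reached from all in-vertices. $H$ is a depth-$r$ minor of $G$ if there is such a model in which all paths in branch sets have length at most $r$. $\nabla_r(G)$ is the maximum of $|E(H)|/|V(H)|$ over depth-$r$ minors $H$ of $G$; a class has bounded expansion if $\nabla_r(G)\le f(r)$ for some function $f$, all $r\ge0$, all $G$ in the class. $N_r^+(v)$ is the set of vertices $u$ such that $G$ has a directed path of length at most $r$ from $v$ to $u$ (including $v$). $\gamma_r(G)$ is the size of a smallest $X\subseteq V(G)$ with $N_r^+(X)=V(G)$. $\alpha_r(G)$ is the size of a largest set $Y\subseteq V(G)$ such that for all distinct $x,y\in Y$ there is no $u\in V(G)$ with $x,y\in N_r^+(u)$. 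*)

theory Defs
  imports Complex_Main
begin

type_synonym 'a digraph = "'a set \<times> ('a \<times> 'a) set"

definition digraph :: "'a digraph \<Rightarrow> bool" where
  "digraph G \<longleftrightarrow> finite (fst G) \<and> snd G \<subseteq> fst G \<times> fst G \<and> (\<forall>x. (x, x) \<notin> snd G)"

definition reach_within :: "nat \<Rightarrow> ('a \<times> 'a) set \<Rightarrow> 'a \<Rightarrow> 'a \<Rightarrow> bool" where
  "reach_within r A x y \<longleftrightarrow> (\<exists>k\<le>r. (x, y) \<in> A ^^ k)"

text \<open>A directed model of H in G in which all paths inside branch sets have length
  at most r. Branch set of v is the subgraph (dV v, dE v); dA maps arcs of H to arcs of G.\<close>
definition directed_model_depth ::
  "nat \<Rightarrow> 'b digraph \<Rightarrow> 'a digraph \<Rightarrow> ('b \<Rightarrow> 'a set) \<Rightarrow> ('b \<Rightarrow> ('a \<times> 'a) set)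
     \<Rightarrow> ('b \<times> 'b \<Rightarrow> 'a \<times> 'a) \<Rightarrow> bool" where
  "directed_model_depth r H G dV dE dA \<longleftrightarrow>
     (\<forall>v\<in>fst H. dV v \<subseteq> fst G \<and> dE v \<subseteq> snd G \<inter> (dV v \<times> dV v)) \<and>
     (\<forall>u\<in>fst H. \<forall>v\<in>fst H. u \<noteq> v \<longrightarrow> dV u \<inter> dV v = {}) \<and>
     (\<forall>e\<in>snd H. dA e \<in> snd G \<and> fst (dA e) \<in> dV (fst e) \<and> snd (dA e) \<in> dV (snd e)) \<and>
     (\<forall>v\<in>fst H.
        (let In = {snd (dA e) | e. e \<in> snd H \<and> snd e = v};
             Out = {fst (dA e) | e. e \<in> snd H \<and> fst e = v}
         in (\<forall>x\<in>In. \<forall>y\<in>Out. reach_within r (dE v) x y) \<and>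
            (\<exists>z\<in>dV v. \<forall>y\<in>Out. reach_within r (dE v) z y) \<and>
            (\<exists>z\<in>dV v. \<forall>x\<in>In. reach_within r (dE v) x z)))"

definition depth_minor :: "nat \<Rightarrow> 'b digraph \<Rightarrow> 'a digraph \<Rightarrow> bool" where
  "depth_minor r H G \<longleftrightarrow> digraph H \<and> (\<exists>dV dE dA. directed_model_depth r H G dV dE dA)"

text \<open>\<nabla>_r(G): maximum edge density |E(H)|/|V(H)| over depth-r minors H of G
  (minors taken up to isomorphism, represented on vertex type nat).\<close>
definition nabla :: "nat \<Rightarrow> 'a digraph \<Rightarrow> real" where
  "nabla r G = Sup {real (card (snd H)) / real (card (fst H)) | H :: nat digraph. depth_minor r H G}"

definition bounded_expansion :: "'a digraph set \<Rightarrow> bool" where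
  "bounded_expansion C \<longleftrightarrow> (\<exists>f :: nat \<Rightarrow> real. \<forall>r. \<forall>G\<in>C. nabla r G \<le> f r)"

definition out_nbhd :: "nat \<Rightarrow> 'a digraph \<Rightarrow> 'a \<Rightarrow> 'a set" where
  "out_nbhd r G v = {u \<in> fst G. reach_within r (snd G) v u}"

definition out_nbhd_set :: "nat \<Rightarrow> 'a digraph \<Rightarrow> 'a set \<Rightarrow> 'a set" where
  "out_nbhd_set r G X = (\<Union>v\<in>X. out_nbhd r G v)"

definition gamma :: "nat \<Rightarrow> 'a digraph \<Rightarrow> nat" where
  "gamma r G = (LEAST n. \<exists>X. X \<subseteq> fst G \<and> card X = n \<and> out_nbhd_set r G X = fst G)"

definition alpha :: "nat \<Rightarrow> 'a digraph \<Rightarrow> nat" where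
  "alpha r G = Max {card Y | Y. Y \<subseteq> fst G \<and>
     (\<forall>x\<in>Y. \<forall>y\<in>Y. x \<noteq> y \<longrightarrow> \<not> (\<exists>u\<in>fst G. x \<in> out_nbhd r G u \<and> y \<in> out_nbhd r G u))}"

end

theory Submission
  imports Defs "HOL-Library.Nat_Bijection"
begin

text \<open>Take a hub h, leaves v_1, ..., v_n and, for every pair i \<noteq> j, a vertex s_ij with
  arcs h \<rightarrow> s_ij \<rightarrow> v_i, v_j. Two distinct leaves v_i, v_j are both dominated by s_ij and
  all other vertices by h, so alpha_1 \<le> 2, while s_01 and v_2 have no common dominator.
  Every vertex dominates at most two leaves, so gamma_1 \<ge> n/2. For the expansion, every
  arc ending in a vertex of positive out-degree starts at h. Hence in a branch set avoiding
  h the vertex reaching all out-vertices is the only out-vertex, and the branch set has at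
  most two outgoing arcs of the minor; the single branch set containing h has at most
  |V(H)|. So every depth-r minor H has at most 3|V(H)| arcs, whatever r is.\<close>

lemma relpow_from_non_hub_to_non_sink_length_0:
  assumes "A \<subseteq> E" and hub: "\<And>x y. (x, y) \<in> E \<Longrightarrow> y \<in> Domain E \<Longrightarrow> x = h"
    and "(z, t) \<in> A ^^ k" "t \<in> Domain E" "z \<noteq> h"
  shows "k = 0"
  using assms(3-5)
proof (induction k arbitrary: t)
  case (Suc k)
  then obtain y where walk: "(z, y) \<in> A ^^ k" and "(y, t) \<in> A" by (meson relpow_Suc_E)
  then have "y = h" using assms(1) hub Suc.prems(2) by blast
  moreover have "h \<in> Domain E" using \<open>(y, t) \<in> A\<close> \<open>y = h\<close> assms(1) by blast
  ultimately have "k = 0" using Suc.IH walk \<open>z \<noteq> h\<close> by blast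
  then show ?case using walk \<open>y = h\<close> \<open>z \<noteq> h\<close> by simp
qed simp

lemma
  assumes "directed_model_depth r H G dV dE dA"
  shows directed_model_branch_arcs: "v \<in> fst H \<Longrightarrow> dE v \<subseteq> snd G"
    and directed_model_branches_disjoint:
      "u \<in> fst H \<Longrightarrow> v \<in> fst H \<Longrightarrow> x \<in> dV u \<Longrightarrow> x \<in> dV v \<Longrightarrow> u = v"
    and directed_model_arc:
      "e \<in> snd H \<Longrightarrow> dA e \<in> snd G \<and> fst (dA e) \<in> dV (fst e) \<and> snd (dA e) \<in> dV (snd e)"
    and directed_model_out_root:
      "v \<in> fst H \<Longrightarrow> \<exists>z\<in>dV v. \<forall>e\<in>snd H. fst e = v \<longrightarrow> reach_within r (dE v) z (fst (dA e))"
proof -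
  note M = assms[unfolded directed_model_depth_def Let_def]
  note branches = M[THEN conjunct1] and disjoint = M[THEN conjunct2, THEN conjunct1]
    and arcs = M[THEN conjunct2, THEN conjunct2, THEN conjunct1]
    and roots = M[THEN conjunct2, THEN conjunct2, THEN conjunct2]
  show "v \<in> fst H \<Longrightarrow> dE v \<subseteq> snd G" using branches by blast
  show "u \<in> fst H \<Longrightarrow> v \<in> fst H \<Longrightarrow> x \<in> dV u \<Longrightarrow> x \<in> dV v \<Longrightarrow> u = v"
    using disjoint by blast
  show "e \<in> snd H \<Longrightarrow> dA e \<in> snd G \<and> fst (dA e) \<in> dV (fst e) \<and> snd (dA e) \<in> dV (snd e)"
    using arcs by blast
  assume "v \<in> fst H"
  then have "\<exists>z\<in>dV v. \<forall>y\<in>{fst (dA e) | e. e \<in> snd H \<and> fst e = v}. reach_within r (dE v) z y"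
    using roots by (simp only: Ball_def)
  then show "\<exists>z\<in>dV v. \<forall>e\<in>snd H. fst e = v \<longrightarrow> reach_within r (dE v) z (fst (dA e))" by blast
qed

lemma directed_model_arc_map_inj:
  assumes M: "directed_model_depth r H G dV dE dA" and "digraph H"
  shows "inj_on dA (snd H)"
proof
  fix e e' assume e: "e \<in> snd H" and e': "e' \<in> snd H" and "dA e = dA e'"
  then have "fst (dA e) \<in> dV (fst e) \<inter> dV (fst e')" "snd (dA e) \<in> dV (snd e) \<inter> dV (snd e')"
    using directed_model_arc[OF M e] directed_model_arc[OF M e'] by auto
  moreover have "fst e \<in> fst H" "fst e' \<in> fst H" "snd e \<in> fst H" "snd e' \<in> fst H"
    using e e' \<open>digraph H\<close> unfolding digraph_def by auto
  ultimately show "e = e'"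
    using directed_model_branches_disjoint[OF M] by (metis IntD1 IntD2 prod.expand)
qed

lemma card_out_arcs_branch_without_hub:
  assumes M: "directed_model_depth r H G dV dE dA" and "digraph H" "digraph G"
    and hub: "\<And>x y. (x, y) \<in> snd G \<Longrightarrow> y \<in> Domain (snd G) \<Longrightarrow> x = h"
    and outdeg: "\<And>x. x \<noteq> h \<Longrightarrow> card {y. (x, y) \<in> snd G} \<le> d"
    and "v \<in> fst H" "h \<notin> dV v"
  shows "card {e \<in> snd H. fst e = v} \<le> d"
proof -
  txt \<open>The root z of the branch set reaches the tail of every outgoing arc; as z is not
    the hub, each such walk is trivial, so all these arcs leave z itself.\<close>
  obtain z where "z \<in> dV v" and z: "\<forall>e\<in>snd H. fst e = v \<longrightarrow> reach_within r (dE v) z (fst (dA e))"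
    using directed_model_out_root[OF M \<open>v \<in> fst H\<close>] by blast
  then have "z \<noteq> h" using \<open>h \<notin> dV v\<close> by blast
  have "dA e \<in> {z} \<times> {y. (z, y) \<in> snd G}" if e: "e \<in> snd H" "fst e = v" for e
  proof -
    obtain k where walk: "(z, fst (dA e)) \<in> dE v ^^ k"
      using z e unfolding reach_within_def by blast
    have "dA e \<in> snd G" using directed_model_arc[OF M e(1)] by blast
    then have "fst (dA e) \<in> Domain (snd G)" by (cases "dA e") auto
    then have "k = 0"
      using relpow_from_non_hub_to_non_sink_length_0[of "dE v" "snd G" h] walk
        directed_model_branch_arcs[OF M \<open>v \<in> fst H\<close>] hub \<open>z \<noteq> h\<close> by blast
    then show ?thesis using walk \<open>dA e \<in> snd G\<close> by (cases "dA e") auto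
  qed
  then have image: "dA ` {e \<in> snd H. fst e = v} \<subseteq> {z} \<times> {y. (z, y) \<in> snd G}" by blast
  have "finite (fst G)" "snd G \<subseteq> fst G \<times> fst G"
    using \<open>digraph G\<close> unfolding digraph_def by simp_all
  then have "finite {y. (z, y) \<in> snd G}" by (blast intro: finite_subset)
  have "inj_on dA {e \<in> snd H. fst e = v}"
    using directed_model_arc_map_inj[OF M \<open>digraph H\<close>] by (rule inj_on_subset) blast
  then have "card {e \<in> snd H. fst e = v} = card (dA ` {e \<in> snd H. fst e = v})"
    by (simp add: card_image)
  also have "\<dots> \<le> card ({z} \<times> {y. (z, y) \<in> snd G})"
    using image \<open>finite {y. (z, y) \<in> snd G}\<close> by (intro card_mono) simp_all
  also have "\<dots> \<le> d"
    using outdeg[OF \<open>z \<noteq> h\<close>] by (simp add: card_cartesian_product_singleton)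
  finally show ?thesis .
qed

lemma card_arcs_depth_minor_hub_bound:
  assumes "depth_minor r H G" "digraph G"
    and hub: "\<And>x y. (x, y) \<in> snd G \<Longrightarrow> y \<in> Domain (snd G) \<Longrightarrow> x = h"
    and outdeg: "\<And>x. x \<noteq> h \<Longrightarrow> card {y. (x, y) \<in> snd G} \<le> d"
  shows "card (snd H) \<le> (d + 1) * card (fst H)"
proof -
  obtain dV dE dA where M: "directed_model_depth r H G dV dE dA" and "digraph H"
    using \<open>depth_minor r H G\<close> unfolding depth_minor_def by blast
  define V where "V = fst H"
  define out where "out v = {e \<in> snd H. fst e = v}" for v
  have "finite V" "snd H \<subseteq> V \<times> V" using \<open>digraph H\<close> unfolding digraph_def V_def by auto
  have out_le: "card (out v) \<le> d + (if h \<in> dV v then card V else 0)" if "v \<in> V" for v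
  proof (cases "h \<in> dV v")
    case True
    have "out v \<subseteq> {v} \<times> V" using \<open>snd H \<subseteq> V \<times> V\<close> unfolding out_def by auto
    then have "card (out v) \<le> card V"
      using card_mono[of "{v} \<times> V"] \<open>finite V\<close> by (simp add: card_cartesian_product_singleton)
    then show ?thesis using True by simp
  next
    case False
    then show ?thesis
      using card_out_arcs_branch_without_hub[OF M \<open>digraph H\<close> \<open>digraph G\<close> hub outdeg] that
      unfolding out_def V_def by simp
  qed
  have "card {v \<in> V. h \<in> dV v} \<le> 1"
    using directed_model_branches_disjoint[OF M] \<open>finite V\<close>
    unfolding V_def by (auto simp: card_le_Suc0_iff_eq)
  have "(\<Sum>v\<in>V. if h \<in> dV v then card V else 0) = (\<Sum>v\<in>{v \<in> V. h \<in> dV v}. card V)"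
    using \<open>finite V\<close> by (rule sum.inter_filter[symmetric])
  also have "\<dots> = card V * card {v \<in> V. h \<in> dV v}" by simp
  also have "\<dots> \<le> card V" using \<open>card {v \<in> V. h \<in> dV v} \<le> 1\<close> by simp
  finally have hub_part: "(\<Sum>v\<in>V. if h \<in> dV v then card V else 0) \<le> card V" .
  have "snd H = (\<Union>v\<in>V. out v)" using \<open>snd H \<subseteq> V \<times> V\<close> unfolding out_def by auto
  then have "card (snd H) \<le> (\<Sum>v\<in>V. card (out v))"
    using card_UN_le[OF \<open>finite V\<close>, of out] by simp
  also have "\<dots> \<le> (\<Sum>v\<in>V. d + (if h \<in> dV v then card V else 0))"
    using out_le by (rule sum_mono)
  also have "\<dots> \<le> (d + 1) * card V"
    using hub_part by (simp add: sum.distrib)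
  finally show ?thesis unfolding V_def .
qed

lemma nabla_le_if_depth_minors_sparse:
  assumes "\<And>H :: nat digraph. depth_minor r H G \<Longrightarrow> card (snd H) \<le> c * card (fst H)"
  shows "nabla r G \<le> c"
  unfolding nabla_def
proof (rule cSup_least)
  have "depth_minor r ({}, {}) G"
    unfolding depth_minor_def digraph_def directed_model_depth_def by simp
  then show "{real (card (snd H)) / real (card (fst H)) | H :: nat digraph. depth_minor r H G} \<noteq> {}"
    by blast
next
  fix x assume "x \<in> {real (card (snd H)) / real (card (fst H)) | H :: nat digraph. depth_minor r H G}"
  then obtain H :: "nat digraph" where x: "x = real (card (snd H)) / real (card (fst H))"
    and "card (snd H) \<le> c * card (fst H)" using assms by blast
  then have "real (card (snd H)) \<le> real c * real (card (fst H))" by (metis of_nat_le_iff of_nat_mult)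
  then show "x \<le> real c" unfolding x by (simp add: divide_le_eq)
qed

lemma self_in_out_nbhd: "v \<in> fst G \<Longrightarrow> v \<in> out_nbhd r G v"
  unfolding out_nbhd_def reach_within_def by (auto intro: exI[of _ 0])

lemma out_nbhd_1: "out_nbhd 1 G v = {u \<in> fst G. u = v \<or> (v, u) \<in> snd G}"
  unfolding out_nbhd_def reach_within_def by (auto simp: le_Suc_eq intro: exI[of _ 0] exI[of _ 1])

lemma card_le_mult_gamma:
  assumes "finite (fst G)" "L \<subseteq> fst G"
    and "\<And>v. v \<in> fst G \<Longrightarrow> card (out_nbhd r G v \<inter> L) \<le> d"
  shows "card L \<le> d * gamma r G"
proof -
  have "\<exists>n X. X \<subseteq> fst G \<and> card X = n \<and> out_nbhd_set r G X = fst G"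
    using self_in_out_nbhd[of _ G r] unfolding out_nbhd_set_def out_nbhd_def by blast
  then have "\<exists>X. X \<subseteq> fst G \<and> card X = gamma r G \<and> out_nbhd_set r G X = fst G"
    unfolding gamma_def by (rule LeastI_ex)
  then obtain X where X: "X \<subseteq> fst G" "card X = gamma r G" "out_nbhd_set r G X = fst G"
    by blast
  have "finite X" using X(1) assms(1) by (rule finite_subset)
  have "L = (\<Union>v\<in>X. out_nbhd r G v \<inter> L)"
    using X(3) assms(2) unfolding out_nbhd_set_def by blast
  then have "card L \<le> (\<Sum>v\<in>X. card (out_nbhd r G v \<inter> L))"
    by (metis card_UN_le[OF \<open>finite X\<close>])
  also have "\<dots> \<le> (\<Sum>v\<in>X. d)" using assms(3) X(1) by (intro sum_mono) blast
  finally show ?thesis using X(2) by (simp add: mult.commute)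
qed

definition scattered :: "nat \<Rightarrow> 'a digraph \<Rightarrow> 'a set \<Rightarrow> bool" where
  "scattered r G Y \<longleftrightarrow>
     (\<forall>x\<in>Y. \<forall>y\<in>Y. x \<noteq> y \<longrightarrow> \<not> (\<exists>u\<in>fst G. x \<in> out_nbhd r G u \<and> y \<in> out_nbhd r G u))"

lemma alpha_eqI:
  assumes "finite (fst G)" "Y \<subseteq> fst G" "scattered r G Y" "card Y = k"
    and "\<And>Y. Y \<subseteq> fst G \<Longrightarrow> scattered r G Y \<Longrightarrow> card Y \<le> k"
  shows "alpha r G = k"
proof -
  let ?M = "{card Y | Y. Y \<subseteq> fst G \<and> scattered r G Y}"
  have "alpha r G = Max ?M" unfolding alpha_def scattered_def ..
  also have "Max ?M = k"
  proof (rule Max_eqI)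
    have "?M \<subseteq> {..card (fst G)}" using card_mono[OF assms(1)] by auto
    then show "finite ?M" by (rule finite_subset) simp
    show "m \<le> k" if "m \<in> ?M" for m using that assms(5) by auto
    show "k \<in> ?M" using assms(2-4) by blast
  qed
  finally show ?thesis .
qed

lemma scattered_card_inter_le_1:
  assumes "scattered r G Y" "finite Y"
    and "\<And>x y. x \<in> A \<Longrightarrow> y \<in> A \<Longrightarrow> x \<noteq> y \<Longrightarrow> \<exists>u\<in>fst G. x \<in> out_nbhd r G u \<and> y \<in> out_nbhd r G u"
  shows "card (Y \<inter> A) \<le> 1"
  using assms unfolding scattered_def by (simp add: card_le_Suc0_iff_eq) blast

text \<open>Vertex 0 is the hub, the odd numbers are the leaves and the even numbers from 2 on
  encode ordered pairs of indices.\<close>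

definition leaf :: "nat \<Rightarrow> nat" where
  "leaf i = 2 * i + 1"

definition pair_node :: "nat \<Rightarrow> nat \<Rightarrow> nat" where
  "pair_node i j = 2 * prod_encode (i, j) + 2"

definition pair_nodes :: "nat \<Rightarrow> nat set" where
  "pair_nodes n = {pair_node i j | i j. i < n \<and> j < n \<and> i \<noteq> j}"

definition pair_digraph :: "nat \<Rightarrow> nat digraph" where
  "pair_digraph n =
     (insert 0 (leaf ` {..<n} \<union> pair_nodes n),
      Pair 0 ` pair_nodes n \<union>
      {(pair_node i j, leaf k) | i j k. i < n \<and> j < n \<and> i \<noteq> j \<and> (k = i \<or> k = j)})"

lemma leaf_eq_iff [simp]: "leaf i = leaf j \<longleftrightarrow> i = j"
  and pair_node_eq_iff [simp]: "pair_node i j = pair_node i' j' \<longleftrightarrow> i = i' \<and> j = j'"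
  and leaf_neq_pair_node [simp]: "leaf k \<noteq> pair_node i j" "pair_node i j \<noteq> leaf k"
  and leaf_neq_0 [simp]: "leaf k \<noteq> 0" "0 \<noteq> leaf k" "0 < leaf k"
  and pair_node_neq_0 [simp]: "pair_node i j \<noteq> 0" "0 \<noteq> pair_node i j"
  unfolding leaf_def pair_node_def by (auto, presburger+)

lemma arc_pair_digraph_iff:
  "(u, v) \<in> snd (pair_digraph n) \<longleftrightarrow>
     u = 0 \<and> v \<in> pair_nodes n \<or>
     (\<exists>i j. u = pair_node i j \<and> i < n \<and> j < n \<and> i \<noteq> j \<and> (v = leaf i \<or> v = leaf j))"
  unfolding pair_digraph_def by auto

lemma finite_pair_nodes: "finite (pair_nodes n)"
proof -
  have "pair_nodes n \<subseteq> (\<lambda>(i, j). pair_node i j) ` ({..<n} \<times> {..<n})"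
    unfolding pair_nodes_def by auto
  then show ?thesis by (rule finite_subset) simp
qed

lemma digraph_pair_digraph: "digraph (pair_digraph n)"
  unfolding digraph_def using finite_pair_nodes
  by (auto simp: arc_pair_digraph_iff) (auto simp: pair_digraph_def pair_nodes_def)

lemma pair_digraph_arcs_into_non_sinks:
  assumes "(x, y) \<in> snd (pair_digraph n)" "y \<in> Domain (snd (pair_digraph n))"
  shows "x = 0"
  using assms unfolding arc_pair_digraph_iff Domain_iff pair_nodes_def by auto

lemma card_le_2_if_subset_doubleton: "A \<subseteq> {a, b} \<Longrightarrow> card A \<le> 2"
  by (rule order_trans[OF card_mono]) (auto simp: card_insert_if)

lemma pair_digraph_out_degree:
  assumes "x \<noteq> 0"
  shows "card {y. (x, y) \<in> snd (pair_digraph n)} \<le> 2"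
proof (cases "\<exists>i j. x = pair_node i j")
  case True
  then obtain i j where "x = pair_node i j" by blast
  then have "{y. (x, y) \<in> snd (pair_digraph n)} \<subseteq> {leaf i, leaf j}"
    unfolding arc_pair_digraph_iff by auto
  then show ?thesis by (rule card_le_2_if_subset_doubleton)
next
  case False
  then have "{y. (x, y) \<in> snd (pair_digraph n)} = {}"
    using assms unfolding arc_pair_digraph_iff by auto
  then show ?thesis by simp
qed

lemma leaves_in_out_nbhd_pair_digraph:
  assumes "v \<in> fst (pair_digraph n)"
  shows "card (out_nbhd 1 (pair_digraph n) v \<inter> leaf ` {..<n}) \<le> 2"
proof -
  consider "v = 0" | i where "v = leaf i" | i j where "v = pair_node i j"
    using assms unfolding pair_digraph_def pair_nodes_def by auto
  then obtain a b where "out_nbhd 1 (pair_digraph n) v \<inter> leaf ` {..<n} \<subseteq> {a, b}"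
  proof cases
    case 1
    show ?thesis
      by (rule that[of "leaf 0" "leaf 0"]) (unfold 1 out_nbhd_1 arc_pair_digraph_iff pair_nodes_def, auto)
  next
    case (2 i)
    show ?thesis
      by (rule that[of "leaf i" "leaf i"]) (unfold 2 out_nbhd_1 arc_pair_digraph_iff, auto)
  next
    case (3 i j)
    show ?thesis
      by (rule that[of "leaf i" "leaf j"]) (unfold 3 out_nbhd_1 arc_pair_digraph_iff, auto)
  qed
  then show ?thesis by (rule card_le_2_if_subset_doubleton)
qed

lemma nabla_pair_digraph: "nabla r (pair_digraph n) \<le> 3"
proof -
  have "card (snd H) \<le> (2 + 1) * card (fst H)" if "depth_minor r H (pair_digraph n)" for H
    using that digraph_pair_digraph pair_digraph_arcs_into_non_sinks pair_digraph_out_degree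
    by (rule card_arcs_depth_minor_hub_bound)
  then have "nabla r (pair_digraph n) \<le> real (2 + 1)"
    by (rule nabla_le_if_depth_minors_sparse)
  then show ?thesis by simp
qed

lemma gamma_pair_digraph: "n \<le> 2 * gamma 1 (pair_digraph n)"
proof -
  have "card (leaf ` {..<n}) \<le> 2 * gamma 1 (pair_digraph n)"
    using digraph_pair_digraph leaves_in_out_nbhd_pair_digraph
    by (intro card_le_mult_gamma) (auto simp: digraph_def pair_digraph_def)
  moreover have "card (leaf ` {..<n}) = n" by (simp add: card_image inj_on_def)
  ultimately show ?thesis by simp
qed

lemma alpha_pair_digraph:
  assumes "n \<ge> 3"
  shows "alpha 1 (pair_digraph n) = 2"
proof (rule alpha_eqI)
  show "finite (fst (pair_digraph n))" using digraph_pair_digraph by (simp add: digraph_def)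
  show "{pair_node 0 1, leaf 2} \<subseteq> fst (pair_digraph n)"
    using assms unfolding pair_digraph_def pair_nodes_def by force
  show "scattered 1 (pair_digraph n) {pair_node 0 1, leaf 2}"
    unfolding scattered_def out_nbhd_1 arc_pair_digraph_iff pair_nodes_def by auto
  show "card {pair_node 0 1, leaf 2} = 2" by simp
next
  fix Y assume Y: "Y \<subseteq> fst (pair_digraph n)" and scattered: "scattered 1 (pair_digraph n) Y"
  then have "finite Y"
    using digraph_pair_digraph finite_subset unfolding digraph_def by blast
  have hub_side: "card (Y \<inter> insert 0 (pair_nodes n)) \<le> 1"
    using scattered \<open>finite Y\<close>
  proof (rule scattered_card_inter_le_1)
    fix x y assume "x \<in> insert 0 (pair_nodes n)" "y \<in> insert 0 (pair_nodes n)"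
    then show "\<exists>u\<in>fst (pair_digraph n). x \<in> out_nbhd 1 (pair_digraph n) u \<and> y \<in> out_nbhd 1 (pair_digraph n) u"
      unfolding out_nbhd_1 arc_pair_digraph_iff by (intro bexI[of _ 0]) (auto simp: pair_digraph_def)
  qed
  have leaf_side: "card (Y \<inter> leaf ` {..<n}) \<le> 1"
    using scattered \<open>finite Y\<close>
  proof (rule scattered_card_inter_le_1)
    fix x y assume "x \<in> leaf ` {..<n}" "y \<in> leaf ` {..<n}" "x \<noteq> y"
    then obtain i j where "x = leaf i" "y = leaf j" "i < n" "j < n" "i \<noteq> j" by auto
    then show "\<exists>u\<in>fst (pair_digraph n). x \<in> out_nbhd 1 (pair_digraph n) u \<and> y \<in> out_nbhd 1 (pair_digraph n) u"
      unfolding out_nbhd_1 arc_pair_digraph_iff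
      by (intro bexI[of _ "pair_node i j"]) (auto simp: pair_digraph_def pair_nodes_def)
  qed
  have "Y = (Y \<inter> insert 0 (pair_nodes n)) \<union> (Y \<inter> leaf ` {..<n})"
    using Y unfolding pair_digraph_def by auto
  then have "card Y = card ((Y \<inter> insert 0 (pair_nodes n)) \<union> (Y \<inter> leaf ` {..<n}))"
    by (rule arg_cong)
  also have "\<dots> \<le> card (Y \<inter> insert 0 (pair_nodes n)) + card (Y \<inter> leaf ` {..<n})"
    by (rule card_Un_le)
  finally show "card Y \<le> 2" using hub_side leaf_side by linarith
qed

lemma inj_pair_digraph: "inj pair_digraph"
proof
  fix m n assume "pair_digraph m = pair_digraph n"
  then have "leaf k \<in> fst (pair_digraph m) \<longleftrightarrow> leaf k \<in> fst (pair_digraph n)" for k by simp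
  then have "k < m \<longleftrightarrow> k < n" for k by (auto simp: pair_digraph_def pair_nodes_def image_iff)
  then show "m = n" by (metis less_irrefl nat_neq_iff)
qed

theorem mainTheorem6:
  shows "\<exists>C :: nat digraph set.
           (\<forall>G\<in>C. digraph G) \<and> bounded_expansion C \<and>
           (\<forall>c::nat. infinite {G \<in> C. gamma 1 G \<ge> c}) \<and>
           (\<forall>G\<in>C. alpha 1 G = 2)"
proof (intro exI[of _ "pair_digraph ` {3..}"] conjI allI)
  show "\<forall>G\<in>pair_digraph ` {3..}. digraph G" using digraph_pair_digraph by blast
  show "bounded_expansion (pair_digraph ` {3..})"
    unfolding bounded_expansion_def using nabla_pair_digraph by (intro exI[of _ "\<lambda>_. 3"]) blast
  show "\<forall>G\<in>pair_digraph ` {3..}. alpha 1 G = 2" using alpha_pair_digraph by auto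
  fix c :: nat
  have "c \<le> gamma 1 (pair_digraph n)" if "2 * c + 3 \<le> n" for n
    using gamma_pair_digraph[of n] that by linarith
  then have "pair_digraph ` {2 * c + 3..} \<subseteq> {G \<in> pair_digraph ` {3..}. c \<le> gamma 1 G}"
    by auto
  moreover have "infinite (pair_digraph ` {2 * c + 3..})"
    using inj_pair_digraph infinite_Ici by (simp add: finite_image_iff inj_on_subset)
  ultimately show "infinite {G \<in> pair_digraph ` {3..}. c \<le> gamma 1 G}"
    using finite_subset by blast
qed

end
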